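(* Let $N\ge2$ and consider the opinion process on the one-dimensional graph with vertices labelled $0,1,\dots,N$ (vertex $k$ corresponding to the point $k/N$), boundary vertices $0$ and $N$ with boundary opinions $T_-:=T_0$ and $T_+:=T_N$, internal vertices $1,\dots,N-1$, and edges $\{k,k+1\}$ for $k=1,\dots,N-1$ oriented from $k$ to $k+1$ together with the edge from $1$ to $0$. Let $O^{\mathrm{stat}}=(O^{\mathrm{stat}}_k)_{k=0}^N$ be distributed according to the invariant measure $\nu^O$ of this process, and let $m(x):=T_-+x(T_+-T_-)$. Then for every $\epsilon>0$ and every continuous $\psi:[0,1]\to\mathbb R$, $\lim_{N\to\infty}\mathbb P_{\nu^O}\left(\left|\frac1N\sum_{k=0}^N\psi(k/N)O^{\mathrm{stat}}_k-\int_0^1\psi(x)m(x)\,dx\right|>\epsilon\right)=0.$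
   Context: Opinion process on a finite oriented graph $(\overline{\mathbb V},\overline E)$ with internal vertices $\mathbb V$, boundary vertices $\partial\mathbb V$, boundary edges oriented $ij$ with $i\in\mathbb V$, $j\in\partial\mathbb V$, and fixed boundary values $T_j>0$: the Markov process on $\mathbb R_+^{\overline{\mathbb V}}$ with $O_j\equiv T_j$ for $j\in\partial\mathbb V$ and generator $L^Of(O)=\sum_{ij\in\overline E}\int_0^1dv\,[f(H^O_{ij;v}O)-f(O)]$, where $(H^O_{ij;v}O)_\ell=vO_i+(1-v)O_j$ for $\ell\in\{i,j\}\cap\mathbb V$ and $(H^O_{ij;v}O)_\ell=O_\ell$ otherwise. It has a unique invariant probability measure $\nu^O$. *)

theory Defs
  imports "HOL-Probability.Probability"
begin

definition internal_vertices :: "nat \<Rightarrow> nat set" where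
  "internal_vertices N = {1..N-1}"

definition opinion_edges :: "nat \<Rightarrow> (nat \<times> nat) set" where
  "opinion_edges N = {(k, k+1) | k. 1 \<le> k \<and> k \<le> N - 1} \<union> {(1, 0)}"

definition opinion_update :: "nat \<Rightarrow> nat \<Rightarrow> nat \<Rightarrow> real \<Rightarrow> (nat \<Rightarrow> real) \<Rightarrow> (nat \<Rightarrow> real)" where
  "opinion_update N i j v X =
     (\<lambda>l. if l \<in> {i, j} \<inter> internal_vertices N then v * X i + (1 - v) * X j else X l)"

definition opinion_generator :: "nat \<Rightarrow> ((nat \<Rightarrow> real) \<Rightarrow> real) \<Rightarrow> (nat \<Rightarrow> real) \<Rightarrow> real" where
  "opinion_generator N f X =
     (\<Sum>(i, j)\<in>opinion_edges N.
        (LINT v:{0..1}|lborel. f (opinion_update N i j v X) - f X))"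

definition opinion_space :: "nat \<Rightarrow> (nat \<Rightarrow> real) measure" where
  "opinion_space N = PiM {0..N} (\<lambda>_. borel)"

definition opinion_invariant :: "nat \<Rightarrow> real \<Rightarrow> real \<Rightarrow> (nat \<Rightarrow> real) measure \<Rightarrow> bool" where
  "opinion_invariant N Tm Tp \<nu> \<longleftrightarrow>
     prob_space \<nu> \<and> sets \<nu> = sets (opinion_space N) \<and>
     (AE X in \<nu>. X 0 = Tm \<and> X N = Tp \<and> (\<forall>k\<in>{0..N}. 0 \<le> X k)) \<and>
     (\<forall>f. f \<in> borel_measurable (opinion_space N) \<longrightarrow> (\<exists>B. \<forall>x. \<bar>f x\<bar> \<le> B) \<longrightarrow>
          (\<integral>X. opinion_generator N f X \<partial>\<nu>) = 0)"

end

theory Submission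
  imports Defs
begin

(* Two test functions are fed into the invariance identity: the integral of L f against nu
   vanishes for every bounded measurable f.

   With b = max T_- T_+, the truncated excess energy min (sum_k ((O_k - b)_+)^2) K has a
   nonpositive generator, strictly negative unless the excess (O_k - b)_+ is constant along
   the edges. Since the excess vanishes at the boundary, nu is carried by configurations
   with values in [0, b].

   On such configurations let y = O - m be the deviation from the linear profile
   m_k = T_- + (k/N) (T_+ - T_-), and consider the quadratic form sum_{a,c} A_{ac} y_a y_c with
   A = G + (N/2) Id, where G is the Green's function of the discrete Dirichlet Laplacian. Its
   generator is at most - sum_k y_k^2 + (T_+ - T_-)^2 / 2, so the expected squared deviation
   E_nu (sum_k y_k^2) stays bounded by (T_+ - T_-)^2 / 2 uniformly in N. By Cauchy-Schwarz and
   Markov, (1/N) sum_k psi(k/N) y_k exceeds epsilon/2 with probability O(1/N), while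
   (1/N) sum_k psi(k/N) m_k is a Riemann sum of psi m. *)

section \<open>Edge terms of the generator\<close>

lemma measurable_opinion_component:
  "k \<le> N \<Longrightarrow> (\<lambda>X. X k) \<in> borel_measurable (opinion_space N)"
  unfolding opinion_space_def by (rule measurable_component_singleton) auto

lemma opinion_update_apply:
  "opinion_update N i j v X k =
     (if k \<in> {i, j} \<inter> internal_vertices N then v * X i + (1 - v) * X j else X k)"
  by (simp add: opinion_update_def)

lemma measurable_opinion_update:
  assumes "i \<le> N" "j \<le> N"
  shows "(\<lambda>p. opinion_update N i j (snd p) (fst p))
           \<in> measurable (opinion_space N \<Otimes>\<^sub>M lborel) (opinion_space N)"
  unfolding opinion_space_def
proof (rule measurable_PiM_single')
  fix l assume "l \<in> {0..N}"
  with assms have [measurable]: "(\<lambda>p. fst p k) \<in> borel_measurable (Pi\<^sub>M {0..N} (\<lambda>_. borel) \<Otimes>\<^sub>M lborel)"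
    if "k \<in> {i, j, l}" for k
    using that by auto
  show "(\<lambda>p. opinion_update N i j (snd p) (fst p) l)
      \<in> borel_measurable (Pi\<^sub>M {0..N} (\<lambda>_. borel) \<Otimes>\<^sub>M lborel)"
    unfolding opinion_update_def by measurable
qed (auto simp: space_pair_measure space_PiM opinion_update_def internal_vertices_def PiE_def extensional_def)

lemma opinion_edges_eq: "opinion_edges N = insert (1, 0) ((\<lambda>k. (k, k + 1)) ` {1..N - 1})"
  unfolding opinion_edges_def by auto

lemma finite_opinion_edges: "finite (opinion_edges N)"
  unfolding opinion_edges_eq by simp

lemma opinion_edge_ends:
  "N \<ge> 2 \<Longrightarrow> (i, j) \<in> opinion_edges N \<Longrightarrow> i \<le> N \<and> j \<le> N \<and> i \<in> internal_vertices N \<and> i \<noteq> j"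
  unfolding opinion_edges_eq internal_vertices_def by auto

lemma sum_opinion_edges:
  assumes "N \<ge> 2"
  shows "(\<Sum>(i, j)\<in>opinion_edges N. g i j) = (\<Sum>k<N. if k = 0 then g 1 0 else g k (k + 1))"
proof -
  have "inj_on (\<lambda>k::nat. (k, k + 1)) {1..N - 1}" by (auto simp: inj_on_def)
  then have "(\<Sum>(i, j)\<in>opinion_edges N. g i j) = g 1 0 + (\<Sum>k\<in>{1..N - 1}. g k (k + 1))"
    unfolding opinion_edges_eq by (subst sum.insert) (auto simp: sum.reindex)
  moreover have "{..<N} = insert 0 {1..N - 1}" using assms by auto
  ultimately show ?thesis by (simp add: sum.insert)
qed

lemma borel_measurable_edge_integrand:
  assumes "f \<in> borel_measurable (opinion_space N)" "i \<le> N" "j \<le> N"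
  shows "(\<lambda>p. f (opinion_update N i j (snd p) (fst p))) \<in> borel_measurable (opinion_space N \<Otimes>\<^sub>M lborel)"
  using measurable_comp[OF measurable_opinion_update[OF assms(2,3)] assms(1)] by (simp add: comp_def)

lemma borel_measurable_edge_term:
  fixes f :: "(nat \<Rightarrow> real) \<Rightarrow> real"
  assumes f: "f \<in> borel_measurable (opinion_space N)" and "i \<le> N" "j \<le> N"
  shows "(\<lambda>X. LINT v:{0..1}|lborel. f (opinion_update N i j v X) - f X) \<in> borel_measurable (opinion_space N)"
proof -
  have "(\<lambda>(X, v). indicator {0..1::real} v *\<^sub>R (f (opinion_update N i j v X) - f X))
      \<in> borel_measurable (opinion_space N \<Otimes>\<^sub>M lborel)"
    using borel_measurable_edge_integrand[OF assms] f by (simp add: case_prod_beta') measurable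
  from lborel.borel_measurable_lebesgue_integral[OF this]
  show ?thesis unfolding set_lebesgue_integral_def .
qed

lemma
  fixes f :: "(nat \<Rightarrow> real) \<Rightarrow> real"
  assumes f: "f \<in> borel_measurable (opinion_space N)" and "i \<le> N" "j \<le> N"
    and B: "\<And>x. \<bar>f x\<bar> \<le> B" and X: "X \<in> space (opinion_space N)"
  shows edge_term_integrable: "set_integrable lborel {0..1} (\<lambda>v. f (opinion_update N i j v X) - f X)"
    and abs_edge_term_le: "\<bar>LINT v:{0..1}|lborel. f (opinion_update N i j v X) - f X\<bar> \<le> 2 * B"
proof -
  have "(\<lambda>v. f (opinion_update N i j v X)) \<in> borel_measurable lborel"
    using measurable_Pair2[OF borel_measurable_edge_integrand[OF assms(1-3)] X] by simp
  moreover have bound: "\<bar>f (opinion_update N i j v X) - f X\<bar> \<le> 2 * B" for v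
    using B[of "opinion_update N i j v X"] B[of X] by linarith
  ultimately show si: "set_integrable lborel {0..1} (\<lambda>v. f (opinion_update N i j v X) - f X)"
    by (intro set_integrable_bound[OF borel_integrable_atLeastAtMost'[of 0 1 "\<lambda>_. 2 * B"]])
      (auto simp: set_borel_measurable_def intro!: AE_I2 order_trans[OF bound])
  have "norm (LINT v:{0..1}|lborel. f (opinion_update N i j v X) - f X)
      \<le> (LINT v:{0..1}|lborel. norm (f (opinion_update N i j v X) - f X))"
    by (rule set_integral_norm_bound[OF si])
  also have "\<dots> \<le> (LINT v:{0..1::real}|lborel. 2 * B)"
    using bound by (intro set_integral_mono set_integrable_norm[OF si]) (auto intro: borel_integrable_atLeastAtMost')
  also have "\<dots> = 2 * B" by (simp add: set_integral_const)
  finally show "\<bar>LINT v:{0..1}|lborel. f (opinion_update N i j v X) - f X\<bar> \<le> 2 * B" by simp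
qed

lemma set_integral_quadratic_unit_interval:
  fixes p0 p1 p2 :: real
  shows "(LINT v:{0..1}|lborel. p0 + p1 * v + p2 * v\<^sup>2) = p0 + p1 / 2 + p2 / 3"
proof -
  let ?P = "\<lambda>v::real. p0 * v + p1 * v\<^sup>2 / 2 + p2 * v ^ 3 / 3"
  have "integral\<^sup>L lborel (\<lambda>v. indicator {0..1} v *\<^sub>R (p0 + p1 * v + p2 * v\<^sup>2)) = ?P 1 - ?P 0"
  proof (rule integral_FTC_atLeastAtMost)
    fix x :: real
    have "(?P has_real_derivative p0 + p1 * x + p2 * x\<^sup>2) (at x within {0..1})"
      by (auto intro!: derivative_eq_intros simp: power2_eq_square)
    then show "(?P has_vector_derivative p0 + p1 * x + p2 * x\<^sup>2) (at x within {0..1})"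
      by (simp add: has_real_derivative_iff_has_vector_derivative)
  qed (auto intro!: continuous_intros)
  then show ?thesis by (simp add: set_lebesgue_integral_def)
qed

lemma edge_term_le_quadratic:
  fixes f :: "(nat \<Rightarrow> real) \<Rightarrow> real"
  assumes "f \<in> borel_measurable (opinion_space N)" "i \<le> N" "j \<le> N"
    and "\<And>x. \<bar>f x\<bar> \<le> B" "X \<in> space (opinion_space N)"
    and le: "\<And>v. v \<in> {0..1} \<Longrightarrow> f (opinion_update N i j v X) - f X \<le> p0 + p1 * v + p2 * v\<^sup>2"
  shows "(LINT v:{0..1}|lborel. f (opinion_update N i j v X) - f X) \<le> p0 + p1 / 2 + p2 / 3"
proof -
  have "set_integrable lborel {0..1::real} (\<lambda>v. p0 + p1 * v + p2 * v\<^sup>2)"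
    by (rule borel_integrable_atLeastAtMost') (auto intro!: continuous_intros)
  then have "(LINT v:{0..1}|lborel. f (opinion_update N i j v X) - f X)
      \<le> (LINT v:{0..1}|lborel. p0 + p1 * v + p2 * v\<^sup>2)"
    by (rule set_integral_mono[OF edge_term_integrable[OF assms(1-5)] _ le])
  then show ?thesis by (simp add: set_integral_quadratic_unit_interval)
qed

lemma edge_term_eq_quadratic:
  fixes f :: "(nat \<Rightarrow> real) \<Rightarrow> real"
  assumes "\<And>v. v \<in> {0..1} \<Longrightarrow> f (opinion_update N i j v X) - f X = p0 + p1 * v + p2 * v\<^sup>2"
  shows "(LINT v:{0..1}|lborel. f (opinion_update N i j v X) - f X) = p0 + p1 / 2 + p2 / 3"
proof -
  have "(LINT v:{0..1}|lborel. f (opinion_update N i j v X) - f X)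
      = (LINT v:{0..1}|lborel. p0 + p1 * v + p2 * v\<^sup>2)"
    by (rule set_lebesgue_integral_cong) (auto simp: assms)
  then show ?thesis by (simp add: set_integral_quadratic_unit_interval)
qed

locale opinion_stationary =
  fixes N :: nat and Tm Tp :: real and \<nu> :: "(nat \<Rightarrow> real) measure"
  assumes N_ge_2: "2 \<le> N" and invariant: "opinion_invariant N Tm Tp \<nu>"
begin

sublocale prob_space \<nu>
  using invariant unfolding opinion_invariant_def by auto

lemma sets_nu: "sets \<nu> = sets (opinion_space N)"
  using invariant unfolding opinion_invariant_def by auto

lemma space_nu: "space \<nu> = space (opinion_space N)"
  using sets_eq_imp_space_eq[OF sets_nu] .

lemma measurable_nu: "f \<in> borel_measurable (opinion_space N) \<Longrightarrow> f \<in> borel_measurable \<nu>"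
  using measurable_cong_sets[OF sets_nu refl, of borel] by blast

lemma edge_ends: "(i, j) \<in> opinion_edges N \<Longrightarrow> i \<le> N \<and> j \<le> N \<and> i \<in> internal_vertices N \<and> i \<noteq> j"
  using opinion_edge_ends[OF N_ge_2] .

lemma AE_boundary_nonneg:
  "AE X in \<nu>. X \<in> space (opinion_space N) \<and> X 0 = Tm \<and> X N = Tp \<and> (\<forall>k\<in>{0..N}. 0 \<le> X k)"
  using invariant unfolding opinion_invariant_def by (auto simp: space_nu elim!: AE_mp)

lemma borel_measurable_opinion_generator:
  "f \<in> borel_measurable (opinion_space N) \<Longrightarrow> opinion_generator N f \<in> borel_measurable (opinion_space N)"
  unfolding opinion_generator_def
  by (intro borel_measurable_sum) (auto dest!: edge_ends intro: borel_measurable_edge_term)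

lemma abs_opinion_generator_le:
  fixes f :: "(nat \<Rightarrow> real) \<Rightarrow> real" and B :: real
  assumes f: "f \<in> borel_measurable (opinion_space N)" and B: "\<And>x. \<bar>f x\<bar> \<le> B"
    and X: "X \<in> space (opinion_space N)"
  shows "\<bar>opinion_generator N f X\<bar> \<le> card (opinion_edges N) * (2 * B)"
proof -
  have "\<bar>opinion_generator N f X\<bar>
      \<le> (\<Sum>(i, j)\<in>opinion_edges N. \<bar>LINT v:{0..1}|lborel. f (opinion_update N i j v X) - f X\<bar>)"
    unfolding opinion_generator_def by (rule order_trans[OF sum_abs]) (simp add: case_prod_beta')
  also have "\<dots> \<le> (\<Sum>e\<in>opinion_edges N. 2 * B)"
    by (intro sum_mono) (auto dest!: edge_ends intro: abs_edge_term_le[OF f _ _ B X])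
  finally show ?thesis by simp
qed

lemma
  fixes f :: "(nat \<Rightarrow> real) \<Rightarrow> real"
  assumes f: "f \<in> borel_measurable (opinion_space N)" and B: "\<And>x. \<bar>f x\<bar> \<le> B"
  shows integrable_opinion_generator: "integrable \<nu> (opinion_generator N f)"
    and integral_opinion_generator: "(\<integral>X. opinion_generator N f X \<partial>\<nu>) = 0"
proof -
  show "integrable \<nu> (opinion_generator N f)"
    using abs_opinion_generator_le[OF f B]
    by (intro integrable_const_bound[where B = "card (opinion_edges N) * (2 * B)"])
      (auto simp: space_nu intro: measurable_nu borel_measurable_opinion_generator[OF f])
  show "(\<integral>X. opinion_generator N f X \<partial>\<nu>) = 0"
    using invariant f B unfolding opinion_invariant_def by blast
qed

lemma AE_opinion_generator_eq_0:
  fixes f :: "(nat \<Rightarrow> real) \<Rightarrow> real"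
  assumes f: "f \<in> borel_measurable (opinion_space N)" and B: "\<And>x. \<bar>f x\<bar> \<le> B"
    and nonpos: "AE X in \<nu>. opinion_generator N f X \<le> 0"
  shows "AE X in \<nu>. opinion_generator N f X = 0"
proof -
  have int: "integrable \<nu> (\<lambda>X. - opinion_generator N f X)"
    using integrable_opinion_generator[OF f B] by simp
  have "(\<integral>X. - opinion_generator N f X \<partial>\<nu>) = 0"
    using integral_opinion_generator[OF f B] by simp
  then have "AE X in \<nu>. - opinion_generator N f X = 0"
    using integral_nonneg_eq_0_iff_AE[OF int] nonpos by auto
  then show ?thesis by simp
qed

end

section \<open>The invariant measure lives below the larger boundary value\<close>

definition excess :: "real \<Rightarrow> real \<Rightarrow> real" where
  "excess b x = max (x - b) 0"

definition excess_energy :: "nat \<Rightarrow> real \<Rightarrow> (nat \<Rightarrow> real) \<Rightarrow> real" where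
  "excess_energy N b X = (\<Sum>k\<in>internal_vertices N. (excess b (X k))\<^sup>2)"

definition excess_dirichlet :: "nat \<Rightarrow> real \<Rightarrow> (nat \<Rightarrow> real) \<Rightarrow> real" where
  "excess_dirichlet N b X = (\<Sum>(i, j)\<in>opinion_edges N. (excess b (X i) - excess b (X j))\<^sup>2)"

lemma excess_nonneg: "0 \<le> excess b x"
  by (simp add: excess_def)

lemma excess_eq_0_iff: "excess b x = 0 \<longleftrightarrow> x \<le> b"
  by (simp add: excess_def max_def)

lemma excess_energy_nonneg: "0 \<le> excess_energy N b X"
  unfolding excess_energy_def by (simp add: sum_nonneg)

lemma excess_convex:
  assumes "v \<in> {0..1}"
  shows "excess b (v * x + (1 - v) * y) \<le> v * excess b x + (1 - v) * excess b y"
proof -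
  have "v * x + (1 - v) * y - b = v * (x - b) + (1 - v) * (y - b)" by algebra
  moreover have "v * (x - b) \<le> v * excess b x" "(1 - v) * (y - b) \<le> (1 - v) * excess b y"
    using assms by (auto intro: mult_left_mono simp: excess_def)
  moreover have "0 \<le> v * excess b x + (1 - v) * excess b y"
    using assms by (auto simp: excess_def)
  ultimately show ?thesis by (simp add: excess_def)
qed

lemma borel_measurable_excess_energy: "excess_energy N b \<in> borel_measurable (opinion_space N)"
  unfolding excess_energy_def excess_def
  by (intro borel_measurable_sum borel_measurable_power borel_measurable_max borel_measurable_diff
      borel_measurable_const measurable_opinion_component) (auto simp: internal_vertices_def)

lemma sum_internal_update_diff:
  fixes g :: "real \<Rightarrow> real" and X :: "nat \<Rightarrow> real" and v :: real
  assumes i: "i \<in> internal_vertices N" and "i \<noteq> j"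
  defines "w \<equiv> v * X i + (1 - v) * X j"
  shows "(\<Sum>k\<in>internal_vertices N. g (opinion_update N i j v X k)) - (\<Sum>k\<in>internal_vertices N. g (X k))
    = (g w - g (X i)) + (if j \<in> internal_vertices N then g w - g (X j) else 0)"
proof -
  have "(\<Sum>k\<in>internal_vertices N. g (opinion_update N i j v X k)) - (\<Sum>k\<in>internal_vertices N. g (X k))
     = (\<Sum>k\<in>internal_vertices N. (if k = i then g w - g (X i) else 0) + (if k = j then g w - g (X j) else 0))"
    unfolding sum_subtractf[symmetric]
    by (rule sum.cong) (use \<open>i \<noteq> j\<close> in \<open>auto simp: opinion_update_apply w_def\<close>)
  also have "\<dots> = (g w - g (X i)) + (if j \<in> internal_vertices N then g w - g (X j) else 0)"
    using i by (simp add: sum.distrib internal_vertices_def)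
  finally show ?thesis .
qed

text \<open>Since a boundary end carries no excess, one bound serves both kinds of edges; its integral
  over \<open>v\<close> is \<open>-(a - c)\<^sup>2 / 3\<close>.\<close>

lemma excess_energy_update_le:
  fixes X :: "nat \<Rightarrow> real" and b :: real
  assumes i: "i \<in> internal_vertices N" and "i \<noteq> j" and v: "v \<in> {0..1}"
    and boundary: "j \<notin> internal_vertices N \<Longrightarrow> X j \<le> b"
  defines "a \<equiv> excess b (X i)" and "c \<equiv> excess b (X j)"
  shows "excess_energy N b (opinion_update N i j v X) - excess_energy N b X
           \<le> (c\<^sup>2 - a\<^sup>2) + 4 * c * (a - c) * v + 2 * (a - c)\<^sup>2 * v\<^sup>2"
proof -
  define w where "w = excess b (v * X i + (1 - v) * X j)"
  have "0 \<le> w" "w \<le> v * a + (1 - v) * c"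
    unfolding w_def a_def c_def using excess_convex[OF v] by (auto simp: excess_nonneg)
  then have w2: "w\<^sup>2 \<le> (v * a + (1 - v) * c)\<^sup>2"
    by (intro power_mono)
  have "excess_energy N b (opinion_update N i j v X) - excess_energy N b X
      = (w\<^sup>2 - a\<^sup>2) + (if j \<in> internal_vertices N then w\<^sup>2 - c\<^sup>2 else 0)"
    unfolding excess_energy_def w_def a_def c_def
    using sum_internal_update_diff[OF i \<open>i \<noteq> j\<close>, of "\<lambda>x. (excess b x)\<^sup>2"] by simp
  also have "\<dots> \<le> 2 * (v * a + (1 - v) * c)\<^sup>2 - a\<^sup>2 - c\<^sup>2"
  proof (cases "j \<in> internal_vertices N")
    case False
    then have "c = 0" using boundary by (simp add: c_def excess_eq_0_iff)
    with False w2 show ?thesis by simp (smt (verit) zero_le_power2)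
  qed (use w2 in simp)
  also have "\<dots> = (c\<^sup>2 - a\<^sup>2) + 4 * c * (a - c) * v + 2 * (a - c)\<^sup>2 * v\<^sup>2"
    by (simp add: power2_eq_square algebra_simps)
  finally show ?thesis .
qed

lemma excess_dirichlet_nonneg: "0 \<le> excess_dirichlet N b X"
  unfolding excess_dirichlet_def by (auto intro!: sum_nonneg)

lemma excess_vanishes_if_flat:
  assumes flat: "\<forall>(i, j)\<in>opinion_edges N. excess b (X i) = excess b (X j)"
    and "excess b (X 0) = 0" and "k \<le> N"
  shows "excess b (X k) = 0"
  using \<open>k \<le> N\<close>
proof (induction k)
  case (Suc k)
  have "(Suc k, k) \<in> opinion_edges N \<or> (k, Suc k) \<in> opinion_edges N"
    using Suc.prems by (cases k) (auto simp: opinion_edges_def)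
  then show ?case using flat Suc by auto
qed (use assms in simp)

context opinion_stationary
begin

lemma edge_term_truncated_energy_le:
  fixes b K :: real
  assumes e: "(i, j) \<in> opinion_edges N" and K: "0 \<le> K" and X: "X \<in> space (opinion_space N)"
    and boundary: "j \<notin> internal_vertices N \<Longrightarrow> X j \<le> b"
  defines "f \<equiv> \<lambda>X. min (excess_energy N b X) K"
  shows "(LINT v:{0..1}|lborel. f (opinion_update N i j v X) - f X)
     \<le> (if excess_energy N b X < K then - (excess b (X i) - excess b (X j))\<^sup>2 / 3 else 0)"
proof -
  have ends: "i \<le> N" "j \<le> N" "i \<in> internal_vertices N" "i \<noteq> j" using edge_ends[OF e] by auto
  have f_meas: "f \<in> borel_measurable (opinion_space N)"
    unfolding f_def using borel_measurable_excess_energy by measurable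
  have f_bound: "\<bar>f x\<bar> \<le> K" for x
    unfolding f_def using K excess_energy_nonneg[of N b x] by simp
  note edge_le = edge_term_le_quadratic[OF f_meas ends(1,2) f_bound X]
  show ?thesis
  proof (cases "excess_energy N b X < K")
    case False
    then have "(LINT v:{0..1}|lborel. f (opinion_update N i j v X) - f X) \<le> 0 + 0 / 2 + 0 / 3"
      by (intro edge_le) (auto simp: f_def)
    then show ?thesis using False by simp
  next
    case True
    let ?a = "excess b (X i)" and ?c = "excess b (X j)"
    have "(LINT v:{0..1}|lborel. f (opinion_update N i j v X) - f X)
        \<le> (?c\<^sup>2 - ?a\<^sup>2) + 4 * ?c * (?a - ?c) / 2 + 2 * (?a - ?c)\<^sup>2 / 3"
    proof (rule edge_le)
      fix v :: real assume "v \<in> {0..1}"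
      then have "excess_energy N b (opinion_update N i j v X) - excess_energy N b X
          \<le> (?c\<^sup>2 - ?a\<^sup>2) + 4 * ?c * (?a - ?c) * v + 2 * (?a - ?c)\<^sup>2 * v\<^sup>2"
        using ends boundary by (intro excess_energy_update_le)
      with True show "f (opinion_update N i j v X) - f X \<le> (?c\<^sup>2 - ?a\<^sup>2) + 4 * ?c * (?a - ?c) * v + 2 * (?a - ?c)\<^sup>2 * v\<^sup>2"
        by (simp add: f_def)
    qed
    also have "\<dots> = - (?a - ?c)\<^sup>2 / 3" by (simp add: power2_eq_square field_simps)
    finally show ?thesis using True by simp
  qed
qed

lemma opinion_generator_truncated_energy_le:
  fixes K :: real
  assumes K: "0 \<le> K" and X: "X \<in> space (opinion_space N)" "X 0 = Tm" "X N = Tp"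
  defines "b \<equiv> max Tm Tp"
  shows "opinion_generator N (\<lambda>X. min (excess_energy N b X) K) X
     \<le> (if excess_energy N b X < K then - excess_dirichlet N b X / 3 else 0)"
proof -
  have "(LINT v:{0..1}|lborel. min (excess_energy N b (opinion_update N i j v X)) K - min (excess_energy N b X) K)
      \<le> (if excess_energy N b X < K then - (excess b (X i) - excess b (X j))\<^sup>2 / 3 else 0)"
    if e: "(i, j) \<in> opinion_edges N" for i j
  proof (rule edge_term_truncated_energy_le[OF e K X(1)])
    assume "j \<notin> internal_vertices N"
    then have "j = 0 \<or> j = N" using edge_ends[OF e] unfolding internal_vertices_def by auto
    then show "X j \<le> b" using X unfolding b_def by auto
  qed
  then have "opinion_generator N (\<lambda>X. min (excess_energy N b X) K) X
      \<le> (\<Sum>(i, j)\<in>opinion_edges N.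
            if excess_energy N b X < K then - (excess b (X i) - excess b (X j))\<^sup>2 / 3 else 0)"
    unfolding opinion_generator_def by (intro sum_mono) auto
  also have "\<dots> = (if excess_energy N b X < K then - excess_dirichlet N b X / 3 else 0)"
    unfolding excess_dirichlet_def by (auto simp: sum_negf sum_divide_distrib case_prod_beta')
  finally show ?thesis .
qed

text \<open>Invariance forces the nonpositive generator of each truncation to vanish almost surely.\<close>

lemma AE_excess_dirichlet_eq_0: "AE X in \<nu>. excess_dirichlet N (max Tm Tp) X = 0"
proof -
  let ?b = "max Tm Tp"
  have level: "AE X in \<nu>. excess_energy N ?b X < real K \<longrightarrow> excess_dirichlet N ?b X = 0" for K :: nat
  proof -
    let ?f = "\<lambda>X. min (excess_energy N ?b X) (real K)"
    have bound: "AE X in \<nu>. opinion_generator N ?f X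
        \<le> (if excess_energy N ?b X < real K then - excess_dirichlet N ?b X / 3 else 0)"
      using AE_boundary_nonneg by eventually_elim (intro opinion_generator_truncated_energy_le; simp)
    have "AE X in \<nu>. opinion_generator N ?f X = 0"
    proof (rule AE_opinion_generator_eq_0)
      show "?f \<in> borel_measurable (opinion_space N)" using borel_measurable_excess_energy by measurable
      show "\<bar>?f X\<bar> \<le> real K" for X
        using excess_energy_nonneg[of N ?b X] by simp
      show "AE X in \<nu>. opinion_generator N ?f X \<le> 0"
        using bound
      proof eventually_elim
        case (elim X)
        then show ?case using excess_dirichlet_nonneg[of N ?b X] by (auto split: if_splits)
      qed
    qed
    with bound show ?thesis
    proof eventually_elim
      case (elim X)
      then show ?case using excess_dirichlet_nonneg[of N ?b X] by (auto split: if_splits)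
    qed
  qed
  have "AE X in \<nu>. \<forall>K::nat. excess_energy N ?b X < real K \<longrightarrow> excess_dirichlet N ?b X = 0"
    using level by (subst AE_all_countable) blast
  then show ?thesis by eventually_elim (meson reals_Archimedean2)
qed

lemma AE_le_max_boundary: "AE X in \<nu>. \<forall>k\<in>{0..N}. X k \<le> max Tm Tp"
  using AE_excess_dirichlet_eq_0 AE_boundary_nonneg
proof eventually_elim
  case (elim X)
  let ?b = "max Tm Tp"
  have "\<forall>e\<in>opinion_edges N. (case e of (i, j) \<Rightarrow> (excess ?b (X i) - excess ?b (X j))\<^sup>2) = 0"
    using elim(1) unfolding excess_dirichlet_def
    by (subst (asm) sum_nonneg_eq_0_iff) (auto simp: finite_opinion_edges)
  then have "\<forall>(i, j)\<in>opinion_edges N. excess ?b (X i) = excess ?b (X j)" by auto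
  moreover have "excess ?b (X 0) = 0" using elim(2) by (simp add: excess_eq_0_iff)
  ultimately have "excess ?b (X k) = 0" if "k \<le> N" for k
    using that by (rule excess_vanishes_if_flat)
  then show ?case by (simp add: excess_eq_0_iff)
qed

end

section \<open>A quadratic Lyapunov function\<close>

lemma quadratic_form_update_two:
  fixes A :: "'a \<Rightarrow> 'a \<Rightarrow> real" and y :: "'a \<Rightarrow> real" and s t :: real
  assumes J: "finite J" "i \<in> J" "j \<in> J" "i \<noteq> j" and sym: "\<And>a b. A a b = A b a"
  defines "y' \<equiv> y(i := y i + s, j := y j + t)"
  shows "(\<Sum>a\<in>J. \<Sum>b\<in>J. A a b * y' a * y' b) - (\<Sum>a\<in>J. \<Sum>b\<in>J. A a b * y a * y b)
       = 2 * s * (\<Sum>a\<in>J. A a i * y a) + 2 * t * (\<Sum>a\<in>J. A a j * y a)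
         + s\<^sup>2 * A i i + 2 * s * t * A i j + t\<^sup>2 * A j j"
proof -
  define d where "d a = (if a = i then s else 0) + (if a = j then t else 0)" for a
  have y': "y' a = y a + d a" for a
    using \<open>i \<noteq> j\<close> by (simp add: y'_def d_def)
  have sum_y: "(\<Sum>a\<in>J. y a * (s * A a i + t * A a j)) = s * (\<Sum>a\<in>J. A a i * y a) + t * (\<Sum>a\<in>J. A a j * y a)"
    by (simp add: sum.distrib sum_distrib_left algebra_simps)
  have d_sum: "(\<Sum>a\<in>J. d a * g a) = s * g i + t * g j" for g :: "'a \<Rightarrow> real"
  proof -
    have "(\<Sum>a\<in>J. d a * g a) = (\<Sum>a\<in>J. (if a = i then s * g i else 0) + (if a = j then t * g j else 0))"
      by (rule sum.cong) (auto simp: d_def distrib_right)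
    then show ?thesis using J by (simp add: sum.distrib)
  qed
  have cross1: "(\<Sum>a\<in>J. \<Sum>b\<in>J. y a * (d b * A a b)) = (\<Sum>a\<in>J. y a * (s * A a i + t * A a j))"
    by (simp only: sum_distrib_left[symmetric] d_sum)
  have "(\<Sum>a\<in>J. \<Sum>b\<in>J. y b * (d a * A a b)) = (\<Sum>b\<in>J. y b * (\<Sum>a\<in>J. d a * A a b))"
    by (subst sum.swap) (simp add: sum_distrib_left)
  also have "\<dots> = (\<Sum>b\<in>J. y b * (s * A b i + t * A b j))"
    using d_sum[of "\<lambda>a. A a _"] by (simp add: sym[of _ i] sym[of _ j])
  finally have cross2: "(\<Sum>a\<in>J. \<Sum>b\<in>J. y b * (d a * A a b)) = (\<Sum>a\<in>J. y a * (s * A a i + t * A a j))" .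
  have quad: "(\<Sum>a\<in>J. \<Sum>b\<in>J. d a * (d b * A a b)) = s * (s * A i i + t * A i j) + t * (s * A j i + t * A j j)"
    by (simp only: sum_distrib_left[symmetric] d_sum)
  have "(\<Sum>a\<in>J. \<Sum>b\<in>J. A a b * y' a * y' b) - (\<Sum>a\<in>J. \<Sum>b\<in>J. A a b * y a * y b)
      = (\<Sum>a\<in>J. \<Sum>b\<in>J. y a * (d b * A a b)) + (\<Sum>a\<in>J. \<Sum>b\<in>J. y b * (d a * A a b))
        + (\<Sum>a\<in>J. \<Sum>b\<in>J. d a * (d b * A a b))"
    unfolding y' sum_subtractf[symmetric] sum.distrib[symmetric]
    by (intro sum.cong refl) (simp add: algebra_simps)
  also have "\<dots> = 2 * s * (\<Sum>a\<in>J. A a i * y a) + 2 * t * (\<Sum>a\<in>J. A a j * y a)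
         + s\<^sup>2 * A i i + 2 * s * t * A i j + t\<^sup>2 * A j j"
    unfolding cross1 cross2 quad sum_y using sym[of i j] by (simp add: power2_eq_square algebra_simps)
  finally show ?thesis .
qed

text \<open>The Green's function of the discrete Dirichlet Laplacian on \<open>{0..N}\<close>.\<close>

definition green :: "nat \<Rightarrow> nat \<Rightarrow> nat \<Rightarrow> real" where
  "green N a b = real (min a b) * real (N - max a b) / real N"

lemma green_sym: "green N a b = green N b a"
  unfolding green_def by (simp add: min.commute max.commute)

lemma green_nonneg: "0 \<le> green N a b"
  unfolding green_def by simp

lemma green_diag_le: "a \<le> N \<Longrightarrow> green N a a \<le> real N / 4"
proof (cases "N = 0")
  case False
  assume "a \<le> N"
  have "0 \<le> (real N - 2 * real a)\<^sup>2" by simp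
  then have "real a * real (N - a) * 4 \<le> real N * real N"
    using \<open>a \<le> N\<close> by (simp add: power2_eq_square algebra_simps)
  then show ?thesis using False unfolding green_def by (simp add: field_simps)
qed (simp add: green_def)

lemma green_increment:
  assumes "k < N" "l \<le> N"
  shows "green N l (Suc k) - green N l k = (if k < l then (real N - real l) / real N else - real l / real N)"
proof (cases "k < l")
  case True
  then have "min l (Suc k) = Suc k" "min l k = k" "max l (Suc k) = l" "max l k = l" by auto
  then show ?thesis using True assms unfolding green_def by (simp add: of_nat_diff field_simps)
next
  case False
  then have "min l (Suc k) = l" "min l k = l" "max l (Suc k) = Suc k" "max l k = k" by auto
  then show ?thesis using False assms unfolding green_def by (simp add: of_nat_diff field_simps)
qed

lemma sum_increment_mult_green_increment:
  fixes x :: "nat \<Rightarrow> real"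
  assumes N: "0 < N" and l: "l \<le> N"
  shows "(\<Sum>k<N. (x (k + 1) - x k) * (green N l (k + 1) - green N l k))
       = x l - ((real N - real l) * x 0 + real l * x N) / real N"
proof -
  have "(\<Sum>k<N. (x (k + 1) - x k) * (green N l (k + 1) - green N l k))
      = (\<Sum>k\<in>{0..<l}. (x (Suc k) - x k) * ((real N - real l) / real N))
        + (\<Sum>k\<in>{l..<N}. (x (Suc k) - x k) * (- real l / real N))"
    unfolding lessThan_atLeast0 sum.atLeastLessThan_concat[OF le0 l, symmetric]
    by (intro arg_cong2[where f = "(+)"] sum.cong) (use l in \<open>auto simp: green_increment\<close>)
  also have "\<dots> = (x l - x 0) * ((real N - real l) / real N) + (x N - x l) * (- real l / real N)"
    by (simp only: sum_distrib_right[symmetric] sum_Suc_diff'[OF le0] sum_Suc_diff'[OF l])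
  also have "\<dots> = x l - ((real N - real l) * x 0 + real l * x N) / real N"
    using N by (simp add: field_simps)
  finally show ?thesis .
qed

definition linear_profile :: "nat \<Rightarrow> real \<Rightarrow> real \<Rightarrow> nat \<Rightarrow> real" where
  "linear_profile N T0 TN k = T0 + real k / real N * (TN - T0)"

text \<open>The Green's function makes the first-order part of the generator of the form below equal to
  \<open>-\<Sum>\<^sub>k y\<^sub>k\<^sup>2\<close>. The extra diagonal \<open>N/2\<close> on internal vertices adds the first-order gain
  \<open>-N/2 \<Sum>\<^sub>k h\<^sub>k\<^sup>2\<close> in the edge increments \<open>h\<^sub>k\<close> (up to the constant \<open>(T\<^sub>+ - T\<^sub>-)\<^sup>2/2\<close>),
  which beats the second-order cost of the jumps.\<close>

definition fluct_matrix :: "nat \<Rightarrow> nat \<Rightarrow> nat \<Rightarrow> real" where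
  "fluct_matrix N a b = green N a b + (if a = b \<and> a \<in> internal_vertices N then real N / 2 else 0)"

definition fluct_form :: "nat \<Rightarrow> real \<Rightarrow> real \<Rightarrow> (nat \<Rightarrow> real) \<Rightarrow> real" where
  "fluct_form N T0 TN Z = (\<Sum>a\<in>{0..N}. \<Sum>b\<in>{0..N}.
     fluct_matrix N a b * (Z a - linear_profile N T0 TN a) * (Z b - linear_profile N T0 TN b))"

definition fluct_gradient :: "nat \<Rightarrow> real \<Rightarrow> real \<Rightarrow> (nat \<Rightarrow> real) \<Rightarrow> nat \<Rightarrow> real" where
  "fluct_gradient N T0 TN X p = (\<Sum>a\<in>{0..N}. fluct_matrix N a p * (X a - linear_profile N T0 TN a))"

definition clamp :: "real \<Rightarrow> (nat \<Rightarrow> real) \<Rightarrow> nat \<Rightarrow> real" where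
  "clamp b Z k = max 0 (min b (Z k))"

lemma fluct_matrix_sym: "fluct_matrix N a b = fluct_matrix N b a"
  unfolding fluct_matrix_def using green_sym by auto

lemma fluct_matrix_boundary:
  "a \<le> N \<Longrightarrow> b \<le> N \<Longrightarrow> a \<notin> internal_vertices N \<or> b \<notin> internal_vertices N \<Longrightarrow> fluct_matrix N a b = 0"
  unfolding fluct_matrix_def green_def internal_vertices_def by (cases "a = 0 \<or> b = 0") auto

lemma fluct_form_cong:
  assumes "\<And>k. k \<in> internal_vertices N \<Longrightarrow> Z k = Z' k"
  shows "fluct_form N T0 TN Z = fluct_form N T0 TN Z'"
  unfolding fluct_form_def
proof (intro sum.cong refl)
  fix a b assume "a \<in> {0..N}" "b \<in> {0..N}"
  then show "fluct_matrix N a b * (Z a - linear_profile N T0 TN a) * (Z b - linear_profile N T0 TN b)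
      = fluct_matrix N a b * (Z' a - linear_profile N T0 TN a) * (Z' b - linear_profile N T0 TN b)"
    using assms fluct_matrix_boundary[of a N b] by (cases "a \<in> internal_vertices N \<and> b \<in> internal_vertices N") auto
qed

lemma borel_measurable_fluct_form_clamp:
  "(\<lambda>X. fluct_form N T0 TN (clamp b X)) \<in> borel_measurable (opinion_space N)"
  unfolding fluct_form_def clamp_def
  by (intro borel_measurable_sum borel_measurable_times borel_measurable_diff borel_measurable_max
      borel_measurable_min borel_measurable_const measurable_opinion_component) auto

lemma bounded_fluct_form_clamp: "\<exists>C. \<forall>X. \<bar>fluct_form N T0 TN (clamp b X)\<bar> \<le> C"
proof (intro exI allI)
  fix X
  let ?m = "linear_profile N T0 TN" and ?A = "fluct_matrix N"
  have dev: "\<bar>clamp b X a - ?m a\<bar> \<le> \<bar>b\<bar> + \<bar>?m a\<bar>" for a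
    by (auto simp: clamp_def abs_le_iff)
  have "\<bar>fluct_form N T0 TN (clamp b X)\<bar>
      \<le> (\<Sum>a\<in>{0..N}. \<Sum>c\<in>{0..N}. \<bar>?A a c * (clamp b X a - ?m a) * (clamp b X c - ?m c)\<bar>)"
    unfolding fluct_form_def by (rule order_trans[OF sum_abs sum_mono[OF sum_abs]])
  also have "\<dots> \<le> (\<Sum>a\<in>{0..N}. \<Sum>c\<in>{0..N}. \<bar>?A a c\<bar> * (\<bar>b\<bar> + \<bar>?m a\<bar>) * (\<bar>b\<bar> + \<bar>?m c\<bar>))"
    unfolding abs_mult by (intro sum_mono mult_mono dev mult_nonneg_nonneg) auto
  finally show "\<bar>fluct_form N T0 TN (clamp b X)\<bar>
      \<le> (\<Sum>a\<in>{0..N}. \<Sum>c\<in>{0..N}. \<bar>?A a c\<bar> * (\<bar>b\<bar> + \<bar>?m a\<bar>) * (\<bar>b\<bar> + \<bar>?m c\<bar>))" .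
qed

text \<open>Along an edge \<open>(i, j)\<close> the update moves \<open>X\<^sub>i\<close> by \<open>(1 - v) h\<close> and \<open>X\<^sub>j\<close> by \<open>-v h\<close>, where
  \<open>h = X\<^sub>j - X\<^sub>i\<close>; a move at a boundary end is invisible to the form.\<close>

lemma fluct_form_update_diff:
  fixes X :: "nat \<Rightarrow> real" and T0 TN v :: real
  assumes "N \<ge> 2" and e: "(i, j) \<in> opinion_edges N"
  defines "h \<equiv> X j - X i" and "S \<equiv> fluct_gradient N T0 TN X" and "A \<equiv> fluct_matrix N"
  shows "fluct_form N T0 TN (opinion_update N i j v X) - fluct_form N T0 TN X
     = (2 * h * S i + h\<^sup>2 * A i i) + (- 2 * h * S i - 2 * h * S j - 2 * h\<^sup>2 * A i i - 2 * h\<^sup>2 * A i j) * v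
       + (h\<^sup>2 * A i i + 2 * h\<^sup>2 * A i j + h\<^sup>2 * A j j) * v\<^sup>2"
proof -
  have ends: "i \<le> N" "j \<le> N" "i \<in> internal_vertices N" "i \<noteq> j"
    using opinion_edge_ends[OF assms(1) e] by auto
  define y where "y a = X a - linear_profile N T0 TN a" for a
  define s t where "s = (1 - v) * h" and "t = - v * h"
  have "fluct_form N T0 TN (opinion_update N i j v X) = fluct_form N T0 TN (X(i := X i + s, j := X j + t))"
    by (rule fluct_form_cong) (use ends in \<open>auto simp: opinion_update_apply s_def t_def h_def algebra_simps\<close>)
  moreover have "fluct_form N T0 TN (X(i := X i + s, j := X j + t))
      = (\<Sum>a\<in>{0..N}. \<Sum>b\<in>{0..N}. A a b * (y(i := y i + s, j := y j + t)) a * (y(i := y i + s, j := y j + t)) b)"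
    unfolding fluct_form_def A_def y_def by (intro sum.cong refl) (auto simp: algebra_simps)
  moreover have "fluct_form N T0 TN X = (\<Sum>a\<in>{0..N}. \<Sum>b\<in>{0..N}. A a b * y a * y b)"
    unfolding fluct_form_def A_def y_def ..
  ultimately have "fluct_form N T0 TN (opinion_update N i j v X) - fluct_form N T0 TN X
      = 2 * s * S i + 2 * t * S j + s\<^sup>2 * A i i + 2 * s * t * A i j + t\<^sup>2 * A j j"
    using quadratic_form_update_two[of "{0..N}" i j A y s t] ends fluct_matrix_sym
    unfolding S_def fluct_gradient_def A_def y_def by simp
  then show ?thesis unfolding s_def t_def by (simp add: power2_eq_square algebra_simps)
qed

lemma fluct_matrix_edge_le:
  "k < N \<Longrightarrow> fluct_matrix N k k - fluct_matrix N k (k + 1) + fluct_matrix N (k + 1) (k + 1) \<le> 3 * real N / 2"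
  using green_diag_le[of k N] green_diag_le[of "k + 1" N] green_nonneg[of N k "k + 1"]
  unfolding fluct_matrix_def by auto

context opinion_stationary
begin

definition admissible :: "(nat \<Rightarrow> real) \<Rightarrow> bool" where
  "admissible X \<longleftrightarrow> X \<in> space (opinion_space N) \<and> X 0 = Tm \<and> X N = Tp
     \<and> (\<forall>k\<in>{0..N}. 0 \<le> X k \<and> X k \<le> max Tm Tp)"

lemma AE_admissible: "AE X in \<nu>. admissible X"
  using AE_boundary_nonneg AE_le_max_boundary by eventually_elim (auto simp: admissible_def)

text \<open>Clamping makes the quadratic form a bounded test function without changing it on
  admissible configurations.\<close>

definition lyapunov :: "(nat \<Rightarrow> real) \<Rightarrow> real" where
  "lyapunov X = fluct_form N Tm Tp (clamp (max Tm Tp) X)"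

lemma borel_measurable_lyapunov: "lyapunov \<in> borel_measurable (opinion_space N)"
  unfolding lyapunov_def by (rule borel_measurable_fluct_form_clamp)

lemma bounded_lyapunov: "\<exists>C. \<forall>X. \<bar>lyapunov X\<bar> \<le> C"
  unfolding lyapunov_def by (rule bounded_fluct_form_clamp)

text \<open>Index \<open>k = 0\<close> stands for the edge \<open>(1, 0)\<close>, index \<open>k > 0\<close> for the edge \<open>(k, k + 1)\<close>.\<close>

definition edge_drift :: "(nat \<Rightarrow> real) \<Rightarrow> nat \<Rightarrow> real" where
  "edge_drift X k =
     - (X (k + 1) - X k) * (fluct_gradient N Tm Tp X (k + 1) - fluct_gradient N Tm Tp X k)
     + (X (k + 1) - X k)\<^sup>2
       * (fluct_matrix N k k - fluct_matrix N k (k + 1) + fluct_matrix N (k + 1) (k + 1)) / 3"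

definition sq_deviation :: "(nat \<Rightarrow> real) \<Rightarrow> real" where
  "sq_deviation X = (\<Sum>l\<in>{0..N}. (X l - linear_profile N Tm Tp l)\<^sup>2)"

lemma lyapunov_eq_fluct_form:
  assumes "\<And>k. k \<le> N \<Longrightarrow> 0 \<le> X k \<and> X k \<le> max Tm Tp"
  shows "lyapunov X = fluct_form N Tm Tp X"
  unfolding lyapunov_def
  by (rule fluct_form_cong) (use assms in \<open>auto simp: clamp_def internal_vertices_def\<close>)

lemma edge_term_lyapunov:
  assumes e: "(i, j) \<in> opinion_edges N" and X: "admissible X"
  defines "S \<equiv> fluct_gradient N Tm Tp X" and "A \<equiv> fluct_matrix N"
  shows "(LINT v:{0..1}|lborel. lyapunov (opinion_update N i j v X) - lyapunov X)
    = (X j - X i) * (S i - S j) + (X j - X i)\<^sup>2 * (A i i - A i j + A j j) / 3"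
proof -
  have ends: "i \<le> N" "j \<le> N" using edge_ends[OF e] by auto
  have range: "0 \<le> X k \<and> X k \<le> max Tm Tp" if "k \<le> N" for k
    using X that unfolding admissible_def by auto
  let ?h = "X j - X i"
  have "(LINT v:{0..1}|lborel. lyapunov (opinion_update N i j v X) - lyapunov X)
     = (2 * ?h * S i + ?h\<^sup>2 * A i i) + (- 2 * ?h * S i - 2 * ?h * S j - 2 * ?h\<^sup>2 * A i i - 2 * ?h\<^sup>2 * A i j) / 2
       + (?h\<^sup>2 * A i i + 2 * ?h\<^sup>2 * A i j + ?h\<^sup>2 * A j j) / 3"
  proof (rule edge_term_eq_quadratic)
    fix v :: real assume v: "v \<in> {0..1}"
    have "0 \<le> v * X i + (1 - v) * X j \<and> v * X i + (1 - v) * X j \<le> max Tm Tp"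
      using v range[OF ends(1)] range[OF ends(2)] by (auto intro!: convex_bound_le add_nonneg_nonneg)
    then have "lyapunov (opinion_update N i j v X) = fluct_form N Tm Tp (opinion_update N i j v X)"
      using range by (intro lyapunov_eq_fluct_form) (auto simp: opinion_update_apply)
    moreover have "lyapunov X = fluct_form N Tm Tp X"
      using range by (rule lyapunov_eq_fluct_form)
    ultimately show "lyapunov (opinion_update N i j v X) - lyapunov X
      = (2 * ?h * S i + ?h\<^sup>2 * A i i) + (- 2 * ?h * S i - 2 * ?h * S j - 2 * ?h\<^sup>2 * A i i - 2 * ?h\<^sup>2 * A i j) * v
        + (?h\<^sup>2 * A i i + 2 * ?h\<^sup>2 * A i j + ?h\<^sup>2 * A j j) * v\<^sup>2"
      using fluct_form_update_diff[OF N_ge_2 e] unfolding S_def A_def by simp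
  qed
  also have "\<dots> = ?h * (S i - S j) + ?h\<^sup>2 * (A i i - A i j + A j j) / 3"
    by (simp add: field_simps power2_eq_square)
  finally show ?thesis .
qed

lemma opinion_generator_lyapunov:
  assumes X: "admissible X"
  shows "opinion_generator N lyapunov X = (\<Sum>k<N. edge_drift X k)"
  unfolding opinion_generator_def sum_opinion_edges[OF N_ge_2]
proof (intro sum.cong refl)
  fix k assume "k \<in> {..<N}"
  then have "(k, k + 1) \<in> opinion_edges N" if "k \<noteq> 0" using that by (auto simp: opinion_edges_eq)
  moreover have "(1, 0) \<in> opinion_edges N" by (simp add: opinion_edges_eq)
  ultimately show "(if k = 0 then LINT v:{0..1}|lborel. lyapunov (opinion_update N 1 0 v X) - lyapunov X
       else LINT v:{0..1}|lborel. lyapunov (opinion_update N k (k + 1) v X) - lyapunov X) = edge_drift X k"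
    using X fluct_matrix_sym[of N 1 0]
    by (auto simp: edge_term_lyapunov edge_drift_def algebra_simps power2_commute)
qed


lemma fluct_gradient_eq:
  assumes X: "admissible X" and p: "p \<le> N"
  defines "y \<equiv> \<lambda>l. X l - linear_profile N Tm Tp l"
  shows "fluct_gradient N Tm Tp X p = (\<Sum>l\<in>{0..N}. green N l p * y l) + real N / 2 * y p"
proof -
  have y_boundary: "y 0 = 0" "y N = 0"
    using X N_ge_2 unfolding admissible_def y_def linear_profile_def by auto
  have "fluct_gradient N Tm Tp X p = (\<Sum>l\<in>{0..N}. green N l p * y l)
      + (\<Sum>l\<in>{0..N}. if l = p then (if p \<in> internal_vertices N then real N / 2 else 0) * y p else 0)"
    unfolding fluct_gradient_def sum.distrib[symmetric] y_def
    by (rule sum.cong[OF refl]) (auto simp: fluct_matrix_def algebra_simps)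
  also have "(\<Sum>l\<in>{0..N}. if l = p then (if p \<in> internal_vertices N then real N / 2 else 0) * y p else 0)
      = real N / 2 * y p"
  proof (cases "p \<in> internal_vertices N")
    case False
    then have "p = 0 \<or> p = N" using p by (auto simp: internal_vertices_def)
    then show ?thesis using y_boundary False p by auto
  qed (use p in auto)
  finally show ?thesis .
qed

lemma sum_increment_mult_deviation_increment:
  assumes X: "admissible X"
  defines "h \<equiv> \<lambda>k. X (k + 1) - X k" and "y \<equiv> \<lambda>l. X l - linear_profile N Tm Tp l"
  shows "(\<Sum>k<N. h k * (y (k + 1) - y k)) = (\<Sum>k<N. (h k)\<^sup>2) - (Tp - Tm)\<^sup>2 / real N"
proof -
  have sum_h: "(\<Sum>k<N. h k) = Tp - Tm"
    using X sum_lessThan_telescope[of X N] unfolding admissible_def h_def by simp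
  have "h k * (y (k + 1) - y k) = (h k)\<^sup>2 - (Tp - Tm) / real N * h k" for k
    using N_ge_2 unfolding y_def h_def linear_profile_def by (simp add: field_simps power2_eq_square)
  then have "(\<Sum>k<N. h k * (y (k + 1) - y k)) = (\<Sum>k<N. (h k)\<^sup>2) - (Tp - Tm) / real N * (\<Sum>k<N. h k)"
    by (simp only: sum_subtractf sum_distrib_left)
  then show ?thesis unfolding sum_h by (simp add: power2_eq_square)
qed

lemma sum_increment_mult_gradient_increment:
  assumes X: "admissible X"
  defines "h \<equiv> \<lambda>k. X (k + 1) - X k" and "y \<equiv> \<lambda>l. X l - linear_profile N Tm Tp l"
    and "S \<equiv> fluct_gradient N Tm Tp X"
  shows "(\<Sum>k<N. h k * (S (k + 1) - S k))
       = (\<Sum>l\<in>{0..N}. (y l)\<^sup>2) + real N / 2 * (\<Sum>k<N. (h k)\<^sup>2) - (Tp - Tm)\<^sup>2 / 2"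
proof -
  have N: "0 < N" using N_ge_2 by simp
  have green_part: "(\<Sum>k<N. h k * (green N l (k + 1) - green N l k)) = y l" if "l \<in> {0..N}" for l
    using sum_increment_mult_green_increment[OF N, of l X] that X N
    unfolding admissible_def h_def y_def linear_profile_def by (simp add: field_simps)
  have increment: "S (k + 1) - S k
      = (\<Sum>l\<in>{0..N}. (green N l (k + 1) - green N l k) * y l) + real N / 2 * (y (k + 1) - y k)"
    if "k < N" for k
  proof -
    have "(\<Sum>l\<in>{0..N}. (green N l (k + 1) - green N l k) * y l)
        = (\<Sum>l\<in>{0..N}. green N l (k + 1) * y l) - (\<Sum>l\<in>{0..N}. green N l k * y l)"
      by (simp add: sum_subtractf[symmetric] left_diff_distrib)
    then show ?thesis
      using that fluct_gradient_eq[OF X, of k] fluct_gradient_eq[OF X, of "k + 1"]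
      unfolding S_def y_def by (simp add: algebra_simps)
  qed
  have "(\<Sum>k<N. h k * (S (k + 1) - S k))
      = (\<Sum>k<N. (\<Sum>l\<in>{0..N}. y l * (h k * (green N l (k + 1) - green N l k)))
                + real N / 2 * (h k * (y (k + 1) - y k)))"
  proof (rule sum.cong[OF refl])
    fix k assume "k \<in> {..<N}"
    with increment[of k] show "h k * (S (k + 1) - S k)
      = (\<Sum>l\<in>{0..N}. y l * (h k * (green N l (k + 1) - green N l k))) + real N / 2 * (h k * (y (k + 1) - y k))"
      by (simp add: distrib_left sum_distrib_left mult_ac)
  qed
  also have "\<dots> = (\<Sum>l\<in>{0..N}. y l * (\<Sum>k<N. h k * (green N l (k + 1) - green N l k)))
        + real N / 2 * (\<Sum>k<N. h k * (y (k + 1) - y k))"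
    by (simp add: sum.distrib sum_distrib_left sum.swap[of _ "{..<N}"])
  also have "\<dots> = (\<Sum>l\<in>{0..N}. (y l)\<^sup>2) + real N / 2 * ((\<Sum>k<N. (h k)\<^sup>2) - (Tp - Tm)\<^sup>2 / real N)"
    using green_part sum_increment_mult_deviation_increment[OF X]
    unfolding h_def y_def by (simp add: power2_eq_square)
  also have "\<dots> = (\<Sum>l\<in>{0..N}. (y l)\<^sup>2) + real N / 2 * (\<Sum>k<N. (h k)\<^sup>2) - (Tp - Tm)\<^sup>2 / 2"
    using N by (simp add: field_simps)
  finally show ?thesis .
qed

lemma sum_edge_drift_le:
  assumes X: "admissible X"
  shows "(\<Sum>k<N. edge_drift X k) \<le> - sq_deviation X + (Tp - Tm)\<^sup>2 / 2"
proof -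
  let ?h = "\<lambda>k. X (k + 1) - X k" and ?S = "fluct_gradient N Tm Tp X"
  have second_order: "(?h k)\<^sup>2 * (fluct_matrix N k k - fluct_matrix N k (k + 1) + fluct_matrix N (k + 1) (k + 1)) / 3
      \<le> (?h k)\<^sup>2 * (real N / 2)" if "k < N" for k
  proof -
    have "(?h k)\<^sup>2 * (fluct_matrix N k k - fluct_matrix N k (k + 1) + fluct_matrix N (k + 1) (k + 1))
        \<le> (?h k)\<^sup>2 * (3 * real N / 2)"
      by (rule mult_left_mono[OF fluct_matrix_edge_le[OF that]]) simp
    then show ?thesis by simp
  qed
  have "(\<Sum>k<N. edge_drift X k)
      \<le> (\<Sum>k<N. - ?h k * (?S (k + 1) - ?S k) + (?h k)\<^sup>2 * (real N / 2))"
    unfolding edge_drift_def by (intro sum_mono add_left_mono second_order) simp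
  also have "\<dots> = - (\<Sum>k<N. ?h k * (?S (k + 1) - ?S k)) + (\<Sum>k<N. (?h k)\<^sup>2) * (real N / 2)"
    by (simp only: sum.distrib sum_negf sum_distrib_right[symmetric] mult_minus_left)
  also have "\<dots> = - sq_deviation X + (Tp - Tm)\<^sup>2 / 2"
    unfolding sum_increment_mult_gradient_increment[OF X] sq_deviation_def by simp
  finally show ?thesis .
qed

lemma
  shows integrable_sq_deviation: "integrable \<nu> sq_deviation"
    and expectation_sq_deviation_le: "(\<integral>X. sq_deviation X \<partial>\<nu>) \<le> (Tp - Tm)\<^sup>2 / 2"
proof -
  let ?b = "max Tm Tp" and ?m = "linear_profile N Tm Tp"
  have "sq_deviation \<in> borel_measurable (opinion_space N)"
    unfolding sq_deviation_def
    by (intro borel_measurable_sum borel_measurable_power borel_measurable_diff borel_measurable_const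
        measurable_opinion_component) auto
  moreover have "AE X in \<nu>. norm (sq_deviation X) \<le> (\<Sum>l\<in>{0..N}. (\<bar>?b\<bar> + \<bar>?m l\<bar>)\<^sup>2)"
    using AE_admissible
  proof eventually_elim
    case (elim X)
    have "(X l - ?m l)\<^sup>2 \<le> (\<bar>?b\<bar> + \<bar>?m l\<bar>)\<^sup>2" if "l \<in> {0..N}" for l
    proof -
      have "0 \<le> X l" "X l \<le> ?b" using elim that unfolding admissible_def by auto
      then have "\<bar>X l - ?m l\<bar> \<le> \<bar>?b\<bar> + \<bar>?m l\<bar>"
        using abs_ge_self[of "?m l"] abs_ge_minus_self[of "?m l"] abs_ge_self[of ?b]
        unfolding abs_le_iff by linarith
      then show ?thesis using abs_le_square_iff[of "X l - ?m l" "\<bar>?b\<bar> + \<bar>?m l\<bar>"] by simp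
    qed
    then have "sq_deviation X \<le> (\<Sum>l\<in>{0..N}. (\<bar>?b\<bar> + \<bar>?m l\<bar>)\<^sup>2)"
      unfolding sq_deviation_def by (intro sum_mono)
    moreover have "0 \<le> sq_deviation X" unfolding sq_deviation_def by (simp add: sum_nonneg)
    ultimately show ?case by simp
  qed
  ultimately show int: "integrable \<nu> sq_deviation"
    by (intro integrable_const_bound) (auto intro: measurable_nu)
  obtain C where "\<And>X. \<bar>lyapunov X\<bar> \<le> C"
    using bounded_lyapunov by blast
  note lyap = integrable_opinion_generator[OF borel_measurable_lyapunov this]
    integral_opinion_generator[OF borel_measurable_lyapunov this]
  have "(\<integral>X. sq_deviation X \<partial>\<nu>) \<le> (\<integral>X. (Tp - Tm)\<^sup>2 / 2 - opinion_generator N lyapunov X \<partial>\<nu>)"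
  proof (intro integral_mono_AE int)
    show "AE X in \<nu>. sq_deviation X \<le> (Tp - Tm)\<^sup>2 / 2 - opinion_generator N lyapunov X"
      using AE_admissible
      by eventually_elim (use sum_edge_drift_le in \<open>fastforce simp: opinion_generator_lyapunov\<close>)
  qed (use lyap in simp)
  also have "\<dots> = (Tp - Tm)\<^sup>2 / 2"
    using lyap by (simp add: prob_space)
  finally show "(\<integral>X. sq_deviation X \<partial>\<nu>) \<le> (Tp - Tm)\<^sup>2 / 2" .
qed

end

section \<open>Concentration of the weighted empirical profile\<close>

lemma sq_deviation_ge_if_far:
  fixes a x m :: "nat \<Rightarrow> real" and B I \<epsilon> :: real
  assumes N: "0 < N" and a: "\<And>k. k \<le> N \<Longrightarrow> \<bar>a k\<bar> \<le> B" and "0 \<le> \<epsilon>"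
    and close: "\<bar>(1 / real N) * (\<Sum>k=0..N. a k * m k) - I\<bar> \<le> \<epsilon> / 2"
    and far: "\<epsilon> < \<bar>(1 / real N) * (\<Sum>k=0..N. a k * x k) - I\<bar>"
  shows "\<epsilon>\<^sup>2 * (real N)\<^sup>2 \<le> 4 * (real N + 1) * B\<^sup>2 * (\<Sum>k=0..N. (x k - m k)\<^sup>2)"
proof -
  define Z where "Z = (\<Sum>k=0..N. a k * (x k - m k))"
  have "(\<Sum>k=0..N. a k * x k) = (\<Sum>k=0..N. a k * m k) + Z"
    unfolding Z_def sum.distrib[symmetric] by (rule sum.cong) (auto simp: algebra_simps)
  then have "(1 / real N) * (\<Sum>k=0..N. a k * x k) = (1 / real N) * (\<Sum>k=0..N. a k * m k) + Z / real N"
    by (simp add: add_divide_distrib)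
  then have "\<epsilon> / 2 < \<bar>Z / real N\<bar>"
    using close far by linarith
  then have "\<epsilon> / 2 * real N < \<bar>Z\<bar>" using N by (simp add: field_simps)
  then have "(\<epsilon> / 2 * real N)\<^sup>2 < Z\<^sup>2"
    using \<open>0 \<le> \<epsilon>\<close> by (metis power2_abs power_strict_mono zero_le_mult_iff zero_le_divide_iff
        of_nat_0_le_iff zero_le_numeral pos2)
  also have "\<dots> \<le> (\<Sum>k=0..N. (a k)\<^sup>2) * (\<Sum>k=0..N. (x k - m k)\<^sup>2)"
    unfolding Z_def by (rule Cauchy_Schwarz_ineq_sum)
  also have "\<dots> \<le> (\<Sum>k=0..N. B\<^sup>2) * (\<Sum>k=0..N. (x k - m k)\<^sup>2)"
    by (intro mult_right_mono sum_mono sum_nonneg)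
      (auto simp: abs_le_square_iff[symmetric] intro: order_trans[OF a abs_ge_self])
  finally show ?thesis by (simp add: power2_eq_square algebra_simps)
qed

context opinion_stationary
begin

lemma prob_far_from_integral_le:
  fixes \<psi> :: "real \<Rightarrow> real" and I B \<epsilon> :: real
  assumes B: "0 < B" "\<And>x. x \<in> {0..1} \<Longrightarrow> \<bar>\<psi> x\<bar> \<le> B" and \<epsilon>: "0 < \<epsilon>"
    and close: "\<bar>(1 / real N) * (\<Sum>k=0..N. \<psi> (real k / real N) * linear_profile N Tm Tp k) - I\<bar> \<le> \<epsilon> / 2"
  shows "measure \<nu> {X \<in> space \<nu>. \<bar>(1 / real N) * (\<Sum>k=0..N. \<psi> (real k / real N) * X k) - I\<bar> > \<epsilon>}
     \<le> (Tp - Tm)\<^sup>2 / 2 * (8 * B\<^sup>2 / \<epsilon>\<^sup>2) / real N"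
proof -
  have N: "0 < N" using N_ge_2 by simp
  define t where "t = \<epsilon>\<^sup>2 * (real N)\<^sup>2 / (4 * (real N + 1) * B\<^sup>2)"
  have t: "0 < t" unfolding t_def using \<epsilon> B N by simp
  have "{X \<in> space \<nu>. \<bar>(1 / real N) * (\<Sum>k=0..N. \<psi> (real k / real N) * X k) - I\<bar> > \<epsilon>}
      \<subseteq> {X \<in> space \<nu>. t \<le> sq_deviation X}"
  proof safe
    fix X assume "\<epsilon> < \<bar>(1 / real N) * (\<Sum>k=0..N. \<psi> (real k / real N) * X k) - I\<bar>"
    from sq_deviation_ge_if_far[OF N _ _ close this] B \<epsilon> N
    show "t \<le> sq_deviation X"
      unfolding t_def sq_deviation_def by (simp add: pos_divide_le_eq mult.commute)
  qed
  then have "measure \<nu> {X \<in> space \<nu>. \<bar>(1 / real N) * (\<Sum>k=0..N. \<psi> (real k / real N) * X k) - I\<bar> > \<epsilon>}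
      \<le> measure \<nu> {X \<in> space \<nu>. t \<le> sq_deviation X}"
    by (rule finite_measure_mono) (use integrable_sq_deviation in measurable)
  also have "\<dots> \<le> (\<integral>X. sq_deviation X \<partial>\<nu>) / t"
    by (rule integral_Markov_inequality_measure[OF integrable_sq_deviation sets.top _ t])
      (auto simp: sq_deviation_def intro!: AE_I2 sum_nonneg)
  also have "\<dots> \<le> (Tp - Tm)\<^sup>2 / 2 * (4 * (real N + 1) * B\<^sup>2 / (\<epsilon>\<^sup>2 * (real N)\<^sup>2))"
    using divide_right_mono[OF expectation_sq_deviation_le, of t] t by (simp add: t_def)
  also have "\<dots> \<le> (Tp - Tm)\<^sup>2 / 2 * (8 * B\<^sup>2 / \<epsilon>\<^sup>2) / real N"
  proof -
    have "4 * (real N + 1) * B\<^sup>2 / (\<epsilon>\<^sup>2 * (real N)\<^sup>2) = 4 * (real N + 1) / (real N)\<^sup>2 * (B\<^sup>2 / \<epsilon>\<^sup>2)"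
      by simp
    also have "\<dots> \<le> 8 / real N * (B\<^sup>2 / \<epsilon>\<^sup>2)"
      by (rule mult_right_mono) (use N in \<open>simp_all add: field_simps power2_eq_square\<close>)
    finally show ?thesis
      by (rule order_trans[OF mult_left_mono]) (simp_all add: mult.commute)
  qed
  finally show ?thesis .
qed

end

section \<open>Riemann sums\<close>

lemma integral_uniform_partition:
  fixes g :: "real \<Rightarrow> real"
  assumes g: "continuous_on {0..1} g" and N: "0 < N" and n: "n \<le> N"
  shows "integral {0..real n / real N} g = (\<Sum>k<n. integral {real k / real N..real (k + 1) / real N} g)"
  using n
proof (induction n)
  case (Suc n)
  have "real (Suc n) / real N \<le> 1" using Suc.prems N by simp
  then have "g integrable_on {0..real (Suc n) / real N}"
    by (intro integrable_continuous_real continuous_on_subset[OF g]) auto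
  then have "integral {0..real n / real N} g + integral {real n / real N..real (Suc n) / real N} g
      = integral {0..real (Suc n) / real N} g"
    by (rule Henstock_Kurzweil_Integration.integral_combine[rotated 2])
      (use N in \<open>auto simp: divide_right_mono\<close>)
  then show ?case using Suc by simp
qed simp

lemma abs_integral_sub_left_rectangle_le:
  fixes g :: "real \<Rightarrow> real"
  assumes g: "g integrable_on {a..b}" and "a \<le> b" and w: "\<And>x. x \<in> {a..b} \<Longrightarrow> \<bar>g x - g a\<bar> \<le> w"
  shows "\<bar>integral {a..b} g - g a * (b - a)\<bar> \<le> w * (b - a)"
proof -
  have "integral {a..b} (\<lambda>x. g x - g a) = integral {a..b} g - g a * (b - a)"
    using integral_diff[OF g integrable_const_ivl[of "g a" a b]] \<open>a \<le> b\<close> by (simp add: mult.commute)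
  moreover have "norm (integral {a..b} (\<lambda>x. g x - g a)) \<le> integral {a..b} (\<lambda>x. w)"
    by (rule integral_norm_bound_integral) (use g w in \<open>auto intro!: integrable_diff\<close>)
  ultimately show ?thesis using \<open>a \<le> b\<close> by (simp add: mult.commute)
qed

lemma abs_left_riemann_sum_sub_integral_le:
  fixes g :: "real \<Rightarrow> real"
  assumes g: "continuous_on {0..1} g" and N: "0 < N"
    and w: "\<And>x y. x \<in> {0..1} \<Longrightarrow> y \<in> {0..1} \<Longrightarrow> \<bar>x - y\<bar> \<le> 1 / real N \<Longrightarrow> \<bar>g x - g y\<bar> \<le> w"
  shows "\<bar>(\<Sum>k<N. g (real k / real N)) / real N - integral {0..1} g\<bar> \<le> w"
proof -
  let ?x = "\<lambda>k. real k / real N"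
  have piece: "\<bar>integral {?x k..?x (k + 1)} g - g (?x k) / real N\<bar> \<le> w / real N" if "k < N" for k
  proof -
    have ends: "0 \<le> ?x k" "?x (k + 1) \<le> 1" using that by (simp_all add: field_simps)
    then have sub: "{?x k..?x (k + 1)} \<subseteq> {0..1}" by auto
    have len: "?x (k + 1) - ?x k = 1 / real N" using N by (simp add: field_simps)
    have "\<bar>integral {?x k..?x (k + 1)} g - g (?x k) * (?x (k + 1) - ?x k)\<bar> \<le> w * (?x (k + 1) - ?x k)"
    proof (rule abs_integral_sub_left_rectangle_le)
      show "g integrable_on {?x k..?x (k + 1)}"
        using sub by (intro integrable_continuous_real continuous_on_subset[OF g])
      fix x assume x: "x \<in> {?x k..?x (k + 1)}"
      then have "x \<in> {0..1}" "?x k \<in> {0..1}" using ends by (meson atLeastAtMost_iff order_trans)+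
      then show "\<bar>g x - g (?x k)\<bar> \<le> w"
        using x len by (intro w) auto
    qed (simp add: divide_right_mono)
    then show ?thesis unfolding len by simp
  qed
  have "integral {0..1} g = (\<Sum>k<N. integral {?x k..?x (k + 1)} g)"
    using integral_uniform_partition[OF g N order_refl] N by simp
  then have "\<bar>(\<Sum>k<N. g (?x k)) / real N - integral {0..1} g\<bar>
      = \<bar>\<Sum>k<N. integral {?x k..?x (k + 1)} g - g (?x k) / real N\<bar>"
    by (simp add: sum_subtractf sum_divide_distrib abs_minus_commute)
  also have "\<dots> \<le> (\<Sum>k<N. w / real N)"
    by (rule order_trans[OF sum_abs sum_mono]) (rule piece, simp)
  also have "\<dots> = w" using N by simp
  finally show ?thesis .
qed

lemma left_riemann_sum_tendsto_integral:
  fixes g :: "real \<Rightarrow> real"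
  assumes g: "continuous_on {0..1} g"
  shows "(\<lambda>N. (\<Sum>k<N. g (real k / real N)) / real N) \<longlonglongrightarrow> integral {0..1} g"
proof (rule LIMSEQ_I)
  fix e :: real assume "0 < e"
  obtain d where d: "0 < d" and ucont: "\<And>x y. x \<in> {0..1} \<Longrightarrow> y \<in> {0..1} \<Longrightarrow> dist x y < d \<Longrightarrow> dist (g x) (g y) < e / 2"
    using compact_uniformly_continuous[OF g compact_Icc] \<open>0 < e\<close>
    unfolding uniformly_continuous_on_def by (metis half_gt_zero)
  obtain M :: nat where M: "1 / d < real M" using reals_Archimedean2 by blast
  have "norm ((\<Sum>k<N. g (real k / real N)) / real N - integral {0..1} g) < e" if "M \<le> N" for N
  proof -
    have "real M \<le> real N" using that by simp
    with M have "1 / d < real N" by linarith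
    moreover have "0 < 1 / d" using d by simp
    ultimately have "0 < real N" by linarith
    with \<open>1 / d < real N\<close> d have N: "0 < N" and "1 / real N < d" by (simp_all add: field_simps)
    have "\<bar>(\<Sum>k<N. g (real k / real N)) / real N - integral {0..1} g\<bar> \<le> e / 2"
    proof (rule abs_left_riemann_sum_sub_integral_le[OF g N])
      fix x y assume "x \<in> {0..1}" "y \<in> {0..1}" "\<bar>x - y\<bar> \<le> 1 / real N"
      with \<open>1 / real N < d\<close> have "dist (g x) (g y) < e / 2" by (intro ucont) (auto simp: dist_real_def)
      then show "\<bar>g x - g y\<bar> \<le> e / 2" by (simp add: dist_real_def)
    qed
    then show ?thesis using \<open>0 < e\<close> by simp
  qed
  then show "\<exists>M. \<forall>N\<ge>M. norm ((\<Sum>k<N. g (real k / real N)) / real N - integral {0..1} g) < e"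
    by blast
qed

lemma riemann_sum_tendsto_integral:
  fixes g :: "real \<Rightarrow> real"
  assumes g: "continuous_on {0..1} g"
  shows "(\<lambda>N. (1 / real N) * (\<Sum>k=0..N. g (real k / real N))) \<longlonglongrightarrow> integral {0..1} g"
proof -
  have "(\<lambda>N. (\<Sum>k<N. g (real k / real N)) / real N + g 1 / real N) \<longlonglongrightarrow> integral {0..1} g + 0"
    by (intro tendsto_add left_riemann_sum_tendsto_integral[OF g] lim_const_over_n)
  moreover have "\<forall>\<^sub>F N in sequentially.
      (\<Sum>k<N. g (real k / real N)) / real N + g 1 / real N = (1 / real N) * (\<Sum>k=0..N. g (real k / real N))"
    using eventually_gt_at_top[of 0]
    by eventually_elim (simp add: atLeast0AtMost lessThan_Suc_atMost[symmetric] add_divide_distrib)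
  ultimately show ?thesis by (simp add: Lim_transform_eventually)
qed

theorem theorem2p8:
  fixes Tm Tp :: real and \<nu> :: "nat \<Rightarrow> (nat \<Rightarrow> real) measure"
    and \<psi> :: "real \<Rightarrow> real" and \<epsilon> :: real
  assumes "Tm > 0" and "Tp > 0"
    and "\<And>N. N \<ge> 2 \<Longrightarrow> opinion_invariant N Tm Tp (\<nu> N)"
    and "\<epsilon> > 0"
    and "continuous_on {0..1} \<psi>"
  shows "(\<lambda>N. measure (\<nu> N)
            {X \<in> space (\<nu> N).
               \<bar>(1 / real N) * (\<Sum>k=0..N. \<psi> (real k / real N) * X k)
                 - integral {0..1} (\<lambda>x. \<psi> x * (Tm + x * (Tp - Tm)))\<bar> > \<epsilon>})
         \<longlonglongrightarrow> 0"
proof -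
  let ?I = "integral {0..1} (\<lambda>x. \<psi> x * (Tm + x * (Tp - Tm)))"
  obtain B where B: "0 < B" "\<And>x. x \<in> {0..1} \<Longrightarrow> \<bar>\<psi> x\<bar> \<le> B"
    using compact_imp_bounded[OF compact_continuous_image[OF assms(5) compact_Icc]]
    unfolding bounded_pos by auto
  have "(\<lambda>N. (1 / real N) * (\<Sum>k=0..N. \<psi> (real k / real N) * linear_profile N Tm Tp k)) \<longlonglongrightarrow> ?I"
    using riemann_sum_tendsto_integral[of "\<lambda>x. \<psi> x * (Tm + x * (Tp - Tm))"] assms(5)
    by (simp add: linear_profile_def continuous_intros)
  then have "\<forall>\<^sub>F N in sequentially.
      \<bar>(1 / real N) * (\<Sum>k=0..N. \<psi> (real k / real N) * linear_profile N Tm Tp k) - ?I\<bar> \<le> \<epsilon> / 2"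
    using assms(4) unfolding tendsto_iff dist_real_def by (auto elim: eventually_mono dest!: spec[of _ "\<epsilon> / 2"])
  then have "\<forall>\<^sub>F N in sequentially. measure (\<nu> N)
      {X \<in> space (\<nu> N). \<bar>(1 / real N) * (\<Sum>k=0..N. \<psi> (real k / real N) * X k) - ?I\<bar> > \<epsilon>}
      \<le> (Tp - Tm)\<^sup>2 / 2 * (8 * B\<^sup>2 / \<epsilon>\<^sup>2) / real N"
    using eventually_ge_at_top[of 2]
  proof eventually_elim
    case (elim N)
    interpret opinion_stationary N Tm Tp "\<nu> N"
      using elim(2) assms(3) by unfold_locales auto
    show ?case by (rule prob_far_from_integral_le[OF B assms(4) elim(1)])
  qed
  from real_tendsto_sandwich[OF _ this tendsto_const lim_const_over_n] show ?thesis
    by simp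
qed

end
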